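(* Let $p\ge2$ and $q\ge2$, and let $\mathcal M_{\mathrm{reg}}$ and $\mathcal A_{\mathrm{class}}$ be as in the context. Then $\mathcal A_{\mathrm{class}}$ separates the points of $\mathcal M_{\mathrm{reg}}$: for any two distinct points of $\mathcal M_{\mathrm{reg}}$ there is a function in $\mathcal A_{\mathrm{class}}$ taking distinct values at them.
   Context: Let $\Gamma=\mathbb{R}^{2(p+q)}$ with coordinates $(\boldsymbol u,\boldsymbol p,\boldsymbol v,\boldsymbol\pi)$, $\boldsymbol u,\boldsymbol p\in\mathbb{R}^p$, $\boldsymbol v,\boldsymbol\pi\in\mathbb{R}^q$. Let $\bar\Gamma$ be the set where $H_1=\tfrac12(\boldsymbol p^2-\boldsymbol v^2)$, $H_2=\tfrac12(\boldsymbol\pi^2-\boldsymbol u^2)$ and $D=\boldsymbol u\cdot\boldsymbol p-\boldsymbol v\cdot\boldsymbol\pi$ all vanish. ${\mathrm{SL}}(2,\mathbb{R})$ acts on $\Gamma$ by $(\boldsymbol u,\boldsymbol p)^T\mapsto g(\boldsymbol u,\boldsymbol p)^T$, $(\boldsymbol\pi,\boldsymbol v)^T\mapsto g(\boldsymbol\pi,\boldsymbol v)^T$ (componentwise on the pairs $(u_i,p_i)$, $(\pi_j,v_j)$), preserving $\bar\Gamma$. Let $\bar\Gamma_{\mathrm{reg}}$ be the set of points of $\bar\Gamma$ at which both pairs $(\boldsymbol u,\boldsymbol p)$ and $(\boldsymbol v,\boldsymbol\pi)$ are linearly independent, and $\mathcal M_{\mathrm{reg}}=\bar\Gamma_{\mathrm{reg}}/{\mathrm{SL}}(2,\mathbb{R})$.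 For $x_k=(u_k,p_k)$ ($1\le k\le p$) and $x_{p+k}=(\pi_k,v_k)$ ($1\le k\le q$), set $\mathcal O_{kj}=x_k\times x_j$ (scalar cross product on $\mathbb{R}^2$); these are gauge invariant and $\mathcal A_{\mathrm{class}}$ is the algebra of functions on $\mathcal M_{\mathrm{reg}}$ generated by them. *)

theory Defs
  imports Main "HOL-Analysis.Analysis"
begin

text \<open>A point of Gamma = R^(2(p+q)) with coordinates (u, pp, v, pa): u, pp indexed by {0..<p},
  v, pa indexed by {0..<q}. Coordinates are functions nat => real; only indices in range matter.\<close>
type_synonym point = "(nat \<Rightarrow> real) \<times> (nat \<Rightarrow> real) \<times> (nat \<Rightarrow> real) \<times> (nat \<Rightarrow> real)"

definition H1 :: "nat \<Rightarrow> nat \<Rightarrow> point \<Rightarrow> real" where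
  "H1 p q z = (case z of (u, pp, v, pa) \<Rightarrow>
     ((\<Sum>i<p. (pp i)^2) - (\<Sum>j<q. (v j)^2)) / 2)"

definition H2 :: "nat \<Rightarrow> nat \<Rightarrow> point \<Rightarrow> real" where
  "H2 p q z = (case z of (u, pp, v, pa) \<Rightarrow>
     ((\<Sum>j<q. (pa j)^2) - (\<Sum>i<p. (u i)^2)) / 2)"

definition Dc :: "nat \<Rightarrow> nat \<Rightarrow> point \<Rightarrow> real" where
  "Dc p q z = (case z of (u, pp, v, pa) \<Rightarrow>
     (\<Sum>i<p. u i * pp i) - (\<Sum>j<q. v j * pa j))"

definition lin_indep2 :: "nat \<Rightarrow> (nat \<Rightarrow> real) \<Rightarrow> (nat \<Rightarrow> real) \<Rightarrow> bool" where
  "lin_indep2 n a b = (\<forall>s t. (\<forall>i<n. s * a i + t * b i = 0) \<longrightarrow> s = 0 \<and> t = 0)"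

definition Gamma_bar :: "nat \<Rightarrow> nat \<Rightarrow> point set" where
  "Gamma_bar p q = {z. H1 p q z = 0 \<and> H2 p q z = 0 \<and> Dc p q z = 0}"

definition Gamma_reg :: "nat \<Rightarrow> nat \<Rightarrow> point set" where
  "Gamma_reg p q = {z \<in> Gamma_bar p q. case z of (u, pp, v, pa) \<Rightarrow>
      lin_indep2 p u pp \<and> lin_indep2 q v pa}"

text \<open>SL(2,R): matrices ((a,b),(c,d)) with ad - bc = 1, acting on column vectors.\<close>
type_synonym mat2 = "real \<times> real \<times> real \<times> real"

definition SL2 :: "mat2 set" where
  "SL2 = {(a, b, c, d). a * d - b * c = 1}"

definition act2 :: "mat2 \<Rightarrow> real \<times> real \<Rightarrow> real \<times> real" where
  "act2 g x = (case g of (a, b, c, d) \<Rightarrow> case x of (s, t) \<Rightarrow> (a * s + b * t, c * s + d * t))"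

definition act :: "mat2 \<Rightarrow> point \<Rightarrow> point" where
  "act g z = (case z of (u, pp, v, pa) \<Rightarrow>
     ((\<lambda>i. fst (act2 g (u i, pp i))), (\<lambda>i. snd (act2 g (u i, pp i))),
      (\<lambda>j. snd (act2 g (pa j, v j))), (\<lambda>j. fst (act2 g (pa j, v j)))))"

definition pt_eq :: "nat \<Rightarrow> nat \<Rightarrow> point \<Rightarrow> point \<Rightarrow> bool" where
  "pt_eq p q z w = (case z of (u, pp, v, pa) \<Rightarrow> case w of (u', pp', v', pa') \<Rightarrow>
     (\<forall>i<p. u i = u' i \<and> pp i = pp' i) \<and> (\<forall>j<q. v j = v' j \<and> pa j = pa' j))"

text \<open>Two points of Gamma_reg define the same point of M_reg iff they lie in one SL(2,R)-orbit.\<close>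
definition same_orbit :: "nat \<Rightarrow> nat \<Rightarrow> point \<Rightarrow> point \<Rightarrow> bool" where
  "same_orbit p q z w = (\<exists>g\<in>SL2. pt_eq p q (act g z) w)"

text \<open>x_k for 0 <= k < p+q (0-based): x_k = (u_k,p_k) for k<p, x_{p+k} = (pi_k,v_k).\<close>
definition xk :: "nat \<Rightarrow> point \<Rightarrow> nat \<Rightarrow> real \<times> real" where
  "xk p z k = (case z of (u, pp, v, pa) \<Rightarrow>
     if k < p then (u k, pp k) else (pa (k - p), v (k - p)))"

definition cross2 :: "real \<times> real \<Rightarrow> real \<times> real \<Rightarrow> real" where
  "cross2 x y = fst x * snd y - snd x * fst y"

definition Obs :: "nat \<Rightarrow> nat \<Rightarrow> nat \<Rightarrow> point \<Rightarrow> real" where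
  "Obs p k j z = cross2 (xk p z k) (xk p z j)"

text \<open>A_class: the (unital, real) algebra of functions generated by the O_kj, 0 <= k,j < p+q.
  Its elements are gauge invariant, hence functions on M_reg.\<close>
inductive_set A_class :: "nat \<Rightarrow> nat \<Rightarrow> (point \<Rightarrow> real) set" for p q where
  gen: "k < p + q \<Longrightarrow> j < p + q \<Longrightarrow> Obs p k j \<in> A_class p q"
| const: "(\<lambda>_. c) \<in> A_class p q"
| add: "f \<in> A_class p q \<Longrightarrow> g \<in> A_class p q \<Longrightarrow> (\<lambda>z. f z + g z) \<in> A_class p q"
| mult: "f \<in> A_class p q \<Longrightarrow> g \<in> A_class p q \<Longrightarrow> (\<lambda>z. f z * g z) \<in> A_class p q"

end

theory Submission
  imports Defs
begin

text \<open>Suppose all the observables agree at z and w. Since (u, p) is linearly independent, some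
  x_a \<times> x_b is nonzero. The linear map g sending x_a, x_b to the corresponding vectors y_a, y_b
  of w has determinant (y_a \<times> y_b) / (x_a \<times> x_b) = 1. By Cramer's rule every vector of the plane
  is determined by its cross products with x_b and x_a, and these are preserved in passing from the
  x_k to the y_k; hence g x_k = y_k for all k, and z, w lie in one SL(2,R)-orbit.\<close>

lemma lin_indep2_imp_cross2_nonzero:
  assumes "lin_indep2 n a b"
  shows "\<exists>i<n. \<exists>j<n. cross2 (a i, b i) (a j, b j) \<noteq> 0"
proof (rule ccontr)
  assume no_minor: "\<not> ?thesis"
  have minors: "a i * b j = b i * a j" if "i < n" "j < n" for i j
  proof -
    have "cross2 (a i, b i) (a j, b j) = 0" using no_minor that by blast
    then show ?thesis by (simp add: cross2_def)
  qed
  note indep = assms[unfolded lin_indep2_def, rule_format]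
  show False
  proof (cases "\<forall>i<n. a i = 0")
    case True
    then show False using indep[of 1 0] by simp
  next
    case False
    then obtain i0 where i0: "i0 < n" "a i0 \<noteq> 0" by auto
    have "b i0 * a i + (- a i0) * b i = 0" if "i < n" for i
      using minors[OF i0(1) that] by simp
    then show False using indep[of "b i0" "- a i0"] i0(2) by simp
  qed
qed

lemma cross2_cramer:
  assumes "cross2 X Y \<noteq> 0"
  shows "V = (cross2 V Y / cross2 X Y) *\<^sub>R X + (cross2 X V / cross2 X Y) *\<^sub>R Y"
proof -
  obtain x1 x2 y1 y2 v1 v2 where pts: "X = (x1, x2)" "Y = (y1, y2)" "V = (v1, v2)"
    by (cases X; cases Y; cases V)
  define c where "c = x1 * y2 - x2 * y1"
  have "c \<noteq> 0" using assms by (simp add: c_def pts cross2_def)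
  moreover have "(v1 * y2 - v2 * y1) * x1 + (x1 * v2 - x2 * v1) * y1 = v1 * c"
    and "(v1 * y2 - v2 * y1) * x2 + (x1 * v2 - x2 * v1) * y2 = v2 * c"
    by (simp_all add: c_def algebra_simps)
  ultimately have "(v1 * y2 - v2 * y1) / c * x1 + (x1 * v2 - x2 * v1) / c * y1 = v1"
    and "(v1 * y2 - v2 * y1) / c * x2 + (x1 * v2 - x2 * v1) / c * y2 = v2"
    by (simp_all add: add_divide_distrib[symmetric])
  then show ?thesis
    by (simp add: pts cross2_def c_def[symmetric])
qed

text \<open>The matrix [Z W] [X Y]^(-1), written with the adjugate of [X Y].\<close>
definition sl2_transport :: "real \<times> real \<Rightarrow> real \<times> real \<Rightarrow> real \<times> real \<Rightarrow> real \<times> real \<Rightarrow> mat2" where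
  "sl2_transport X Y Z W = (case (X, Y, Z, W) of ((x1, x2), (y1, y2), (z1, z2), (w1, w2)) \<Rightarrow>
     let c = x1 * y2 - x2 * y1
     in ((z1 * y2 - w1 * x2) / c, (w1 * x1 - z1 * y1) / c,
         (z2 * y2 - w2 * x2) / c, (w2 * x1 - z2 * y1) / c))"

lemma act2_sl2_transport:
  assumes "cross2 X Y \<noteq> 0"
  shows "act2 (sl2_transport X Y Z W) V
    = (cross2 V Y / cross2 X Y) *\<^sub>R Z + (cross2 X V / cross2 X Y) *\<^sub>R W"
proof -
  obtain x1 x2 y1 y2 z1 z2 w1 w2 v1 v2 where
    pts: "X = (x1, x2)" "Y = (y1, y2)" "Z = (z1, z2)" "W = (w1, w2)" "V = (v1, v2)"
    by (cases X; cases Y; cases Z; cases W; cases V)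
  define c where "c = x1 * y2 - x2 * y1"
  have "c \<noteq> 0" using assms by (simp add: c_def pts cross2_def)
  then show ?thesis
    by (simp add: pts sl2_transport_def act2_def cross2_def c_def[symmetric] field_simps)
qed

lemma sl2_transport_in_SL2:
  assumes "cross2 X Y \<noteq> 0" and "cross2 Z W = cross2 X Y"
  shows "sl2_transport X Y Z W \<in> SL2"
proof -
  obtain x1 x2 y1 y2 z1 z2 w1 w2 where
    pts: "X = (x1, x2)" "Y = (y1, y2)" "Z = (z1, z2)" "W = (w1, w2)"
    by (cases X; cases Y; cases Z; cases W)
  define c where "c = x1 * y2 - x2 * y1"
  have c: "c \<noteq> 0" "z1 * w2 - z2 * w1 = c"
    using assms by (simp_all add: c_def pts cross2_def)
  have "(z1 * y2 - w1 * x2) * (w2 * x1 - z2 * y1) - (w1 * x1 - z1 * y1) * (z2 * y2 - w2 * x2)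
      = (z1 * w2 - z2 * w1) * c"
    by (simp add: c_def algebra_simps)
  with c show ?thesis
    by (simp add: pts sl2_transport_def SL2_def c_def[symmetric] times_divide_times_eq
        diff_divide_distrib[symmetric])
qed

lemma SL2_orbit_if_cross2_eq:
  fixes X Y :: "nat \<Rightarrow> real \<times> real"
  assumes "a < n" and "b < n" and "cross2 (X a) (X b) \<noteq> 0"
    and "\<And>k j. k < n \<Longrightarrow> j < n \<Longrightarrow> cross2 (Y k) (Y j) = cross2 (X k) (X j)"
  shows "\<exists>g\<in>SL2. \<forall>k<n. act2 g (X k) = Y k"
proof
  let ?g = "sl2_transport (X a) (X b) (Y a) (Y b)"
  have Y_ab: "cross2 (Y a) (Y b) = cross2 (X a) (X b)"
    using assms by simp
  with assms show "?g \<in> SL2"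
    by (simp add: sl2_transport_in_SL2)
  show "\<forall>k<n. act2 ?g (X k) = Y k"
  proof (intro allI impI)
    fix k assume "k < n"
    with assms have "act2 ?g (X k)
        = (cross2 (Y k) (Y b) / cross2 (Y a) (Y b)) *\<^sub>R Y a
          + (cross2 (Y a) (Y k) / cross2 (Y a) (Y b)) *\<^sub>R Y b"
      by (simp add: act2_sl2_transport Y_ab)
    also have "\<dots> = Y k"
      by (rule cross2_cramer[symmetric]) (use assms(3) Y_ab in simp)
    finally show "act2 ?g (X k) = Y k" .
  qed
qed

lemma Gamma_reg_Obs_nonzero:
  assumes "z \<in> Gamma_reg p q"
  shows "\<exists>a<p + q. \<exists>b<p + q. Obs p a b z \<noteq> 0"
proof -
  obtain u pp v pa where z: "z = (u, pp, v, pa)" by (cases z)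
  with assms have "lin_indep2 p u pp" by (simp add: Gamma_reg_def)
  then obtain a b where "a < p" "b < p" "cross2 (u a, pp a) (u b, pp b) \<noteq> 0"
    using lin_indep2_imp_cross2_nonzero by blast
  then have "a < p + q" "b < p + q" "Obs p a b z \<noteq> 0"
    by (simp_all add: Obs_def xk_def z)
  then show ?thesis by blast
qed

lemma pt_eq_act_iff_xk:
  "pt_eq p q (act g z) w \<longleftrightarrow> (\<forall>k<p + q. act2 g (xk p z k) = xk p w k)"
proof -
  obtain u pp v pa where z: "z = (u, pp, v, pa)" by (cases z)
  obtain u' pp' v' pa' where w: "w = (u', pp', v', pa')" by (cases w)
  have index_split: "(\<forall>k<p + q. P k) \<longleftrightarrow> (\<forall>i<p. P i) \<and> (\<forall>j<q. P (p + j))" for P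
    by (metis add_diff_inverse_nat add_less_cancel_left trans_less_add1)
  show ?thesis
    unfolding index_split by (auto simp: pt_eq_def act_def xk_def z w prod_eq_iff)
qed

theorem mainTheorem5:
  fixes p q :: nat and z w :: point
  assumes "p \<ge> 2" and "q \<ge> 2"
    and "z \<in> Gamma_reg p q" and "w \<in> Gamma_reg p q"
    and "\<not> same_orbit p q z w"
  shows "\<exists>f \<in> A_class p q. f z \<noteq> f w"
proof (rule ccontr)
  assume "\<not> ?thesis"
  then have agree: "\<forall>f\<in>A_class p q. f z = f w" by simp
  have Obs_eq: "cross2 (xk p w k) (xk p w j) = cross2 (xk p z k) (xk p z j)"
    if "k < p + q" "j < p + q" for k j
    using bspec[OF agree A_class.gen[OF that]] by (simp add: Obs_def)
  obtain a b where ab: "a < p + q" "b < p + q" "cross2 (xk p z a) (xk p z b) \<noteq> 0"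
    using Gamma_reg_Obs_nonzero[OF assms(3)] unfolding Obs_def by blast
  have "\<exists>g\<in>SL2. \<forall>k<p + q. act2 g (xk p z k) = xk p w k"
    using SL2_orbit_if_cross2_eq[OF ab Obs_eq] .
  then have "same_orbit p q z w"
    unfolding same_orbit_def pt_eq_act_iff_xk .
  with assms(5) show False ..
qed

end
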